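(* Let $g_1,g_2$ be monic divisors of $x^m-1$ over $\mathbb{F}_{q^2}$, $v_1\in\mathcal{R}$, and let $\mathcal{D}_1$ be the QC code of length $2m$ over $\mathbb{F}_{q^2}$ generated by $(g_1,v_1g_1)$ and $(0,g_2)$. Then $\mathcal{D}_1$ is Hermitian dual-containing iff $g_1\mid g_1^{\perp_H}$, $g_1\mid g_2^{\perp_H}\overline{v_1}^{[q]}$ and $g_2\mid g_2^{\perp_H}(1+v_1\overline{v_1}^{[q]})$.
   Context: $q$ a prime power; $\mathcal{R}=\mathbb{F}_{q^2}[x]/(x^m-1)$, elements identified with representatives of degree $<m$; $[k]=(k_0,\dots,k_{m-1})$; $\overline{k}(x)=k(x^{-1})\bmod(x^m-1)$; $k^{[q]}=\sum k_i^qx^i$; $f^*(x)=x^{\deg f}f(1/x)$; for $k\in\mathcal{R}$, $f=\frac{x^m-1}{\gcd(k,x^m-1)}$, $k^{\perp}=f(0)^{-1}f^*$, $k^{\perp_H}=(k^{[q]})^{\perp}$. "$g\mid a$" for $g\mid x^m-1$ means $g$ divides the representative of $a$. The QC code generated by $(u_{i1},u_{i2})$, $i=1,2$, is $\{([r_1u_{11}+r_2u_{21}],[r_1u_{12}+r_2u_{22}]):r_i\in\mathcal{R}\}$. Hermitian inner product $\sum u_i^qv_i$; dual-containing means $\mathcal{D}_1^{\perp_H}\subseteq\mathcal{D}_1$. *)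

theory Defs
  imports "HOL-Computational_Algebra.Computational_Algebra" "HOL-Library.Cardinality"
begin

(* The ring R = F[x]/(x^m - 1); elements are represented by polynomials of degree < m. *)
definition xm1 :: "nat \<Rightarrow> 'a::field_gcd poly" where
  "xm1 m = monom 1 m - 1"

definition rep :: "nat \<Rightarrow> 'a::field_gcd poly \<Rightarrow> 'a poly" where
  "rep m a = a mod xm1 m"

(* overline: k(x^{-1}) mod (x^m - 1) *)
definition cbar :: "nat \<Rightarrow> 'a::field_gcd poly \<Rightarrow> 'a poly" where
  "cbar m k = rep m (\<Sum>i<m. monom (coeff (rep m k) i) ((m - i) mod m))"

definition frob :: "nat \<Rightarrow> 'a::field_gcd poly \<Rightarrow> 'a poly" where
  "frob q k = map_poly (\<lambda>c. c ^ q) k"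

definition cperp :: "nat \<Rightarrow> 'a::field_gcd poly \<Rightarrow> 'a poly" where
  "cperp m k = (let f = xm1 m div gcd (rep m k) (xm1 m)
                in smult (inverse (coeff f 0)) (reflect_poly f))"

definition cperpH :: "nat \<Rightarrow> nat \<Rightarrow> 'a::field_gcd poly \<Rightarrow> 'a poly" where
  "cperpH q m k = cperp m (frob q k)"

definition rdvd :: "nat \<Rightarrow> 'a::field_gcd poly \<Rightarrow> 'a poly \<Rightarrow> bool" where
  "rdvd m g a \<longleftrightarrow> g dvd rep m a"

(* ambient space F^{2m}: pairs of coefficient vectors, each encoded as polynomial of degree < m *)
definition ambient :: "nat \<Rightarrow> ('a::field_gcd poly \<times> 'a poly) set" where
  "ambient m = {(a, b). degree a < m \<and> degree b < m}"

definition qc_code :: "nat \<Rightarrow> 'a::field_gcd poly \<Rightarrow> 'a poly \<Rightarrow> 'a poly \<Rightarrow> 'a poly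
    \<Rightarrow> ('a poly \<times> 'a poly) set" where
  "qc_code m u11 u12 u21 u22 =
     {(rep m (r1 * u11 + r2 * u21), rep m (r1 * u12 + r2 * u22)) | r1 r2. True}"

definition herm :: "nat \<Rightarrow> nat \<Rightarrow> ('a::field_gcd poly \<times> 'a poly) \<Rightarrow> ('a poly \<times> 'a poly) \<Rightarrow> 'a" where
  "herm q m u v = (\<Sum>i<m. coeff (fst u) i ^ q * coeff (fst v) i)
                 + (\<Sum>i<m. coeff (snd u) i ^ q * coeff (snd v) i)"

definition herm_dual :: "nat \<Rightarrow> nat \<Rightarrow> ('a::field_gcd poly \<times> 'a poly) set \<Rightarrow> ('a poly \<times> 'a poly) set" where
  "herm_dual q m C = {u \<in> ambient m. \<forall>c\<in>C. herm q m u c = 0}"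

definition herm_dual_containing :: "nat \<Rightarrow> nat \<Rightarrow> ('a::field_gcd poly \<times> 'a poly) set \<Rightarrow> bool" where
  "herm_dual_containing q m C \<longleftrightarrow> herm_dual q m C \<subseteq> C"

end

theory Submission
  imports Defs "HOL-Number_Theory.Cong"
begin

text \<open>
  Over \<open>F = GF(q^2)\<close> the map \<open>c \<mapsto> c^q\<close> is an involutive field automorphism, and
  \<open>x \<mapsto> x^(m-1)\<close> inverts \<open>x\<close> in \<open>R = F[x]/(x^m - 1)\<close>; together they make the Hermitian
  conjugation \<open>\<kappa> a = cbar m a\<close> with coefficients raised to the \<open>q\<close>-th power a semilinear ring
  involution of \<open>R\<close>. The Hermitian form of two vectors of length \<open>m\<close> is the constant term of
  \<open>\<kappa> a * c\<close>, and this functional is non-degenerate, so \<open>(a, b)\<close> is orthogonal to the code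
  iff \<open>\<kappa> a * g1 + \<kappa> b * v1 * g1 \<equiv> 0\<close> and \<open>\<kappa> b * g2 \<equiv> 0\<close>. For a monic divisor \<open>g\<close> of
  \<open>x^m - 1\<close> one has \<open>x^m - 1 | \<kappa> b * g\<close> iff \<open>g^\<perp>H | b\<close>, because \<open>g^\<perp>H\<close> is, up to a
  unit, the reciprocal of the conjugated cofactor of \<open>g\<close>. Hence the dual consists of the
  \<open>(a, b)\<close> with \<open>g1^\<perp>H | a + b * \<kappa> v1\<close> and \<open>g2^\<perp>H | b\<close>, while the code consists of
  the \<open>(a, b)\<close> with \<open>g1 | a\<close> and \<open>g2 | b - a * v1\<close>. Testing the inclusion on
  \<open>(g1^\<perp>H, 0)\<close> and \<open>(-g2^\<perp>H * \<kappa> v1, g2^\<perp>H)\<close> yields the three conditions; they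
  suffice because \<open>g1 | g2^\<perp>H * \<kappa> v1\<close> forces \<open>g2 | g1^\<perp>H * v1\<close>.
\<close>

section \<open>Finite fields\<close>

(* The library's finite_field_power_card_eq_same needs sort finite_field, which a type variable
   of sort {finite,field} cannot be given. *)
lemma of_nat_CARD_eq_0: "of_nat CARD('a::{finite,field}) = (0::'a)"
proof -
  have "(\<Sum>x\<in>UNIV. x + 1) = (\<Sum>x\<in>(UNIV::'a set). x)"
    by (rule sum.reindex_bij_witness[of _ "\<lambda>x. x - 1" "\<lambda>x. x + 1"]) auto
  then show ?thesis
    by (simp add: sum.distrib)
qed

lemma power_CARD_eq_self: "(x::'a::{finite,field}) ^ CARD('a) = x"
proof (cases "x = 0")
  case False
  let ?U = "UNIV - {0::'a}"
  have "(\<Prod>y\<in>?U. x * y) = \<Prod>?U"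
    by (rule prod.reindex_bij_witness[of _ "\<lambda>y. y / x" "\<lambda>y. x * y"]) (use False in auto)
  then have "x ^ card ?U = 1"
    by (simp add: prod.distrib)
  moreover have "CARD('a) = Suc (card ?U)"
    by (simp add: card_Diff_singleton)
  ultimately show ?thesis
    by (metis power_Suc mult.right_neutral)
qed simp

lemma q_power_additive_involutive:
  fixes q :: nat
  assumes "\<exists>p e. prime p \<and> e > 0 \<and> q = p ^ e" and "CARD('a::{finite,field}) = q ^ 2"
  shows "(x + y :: 'a) ^ q = x ^ q + y ^ q" and "(x ^ q) ^ q = x"
proof -
  obtain p e where p: "prime p" and q: "q = p ^ e"
    using assms(1) by blast
  have char: "prime CHAR('a)"
    using finite_imp_CHAR_pos[where 'a = 'a] prime_CHAR_semidom by auto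
  moreover have "CHAR('a) dvd CARD('a)"
    using of_nat_CARD_eq_0[where 'a = 'a] by (simp add: of_nat_eq_0_iff_char_dvd)
  ultimately have "CHAR('a) = p"
    using p q assms(2) by (metis prime_dvd_power power_mult primes_dvd_imp_eq)
  then show "(x + y :: 'a) ^ q = x ^ q + y ^ q"
    using char q by (intro freshmans_dream') auto
  show "(x ^ q) ^ q = x"
    using power_CARD_eq_self[of x] assms(2) by (simp add: power2_eq_square power_mult)
qed

section \<open>The ring \<open>F[x]/(x^m - 1)\<close>\<close>

lemma coeff_xm1: "coeff (xm1 m) n = (if n = m then 1 else 0) - (if n = 0 then 1 else 0)"
  by (simp add: xm1_def coeff_monom)

lemma degree_xm1: "m > 0 \<Longrightarrow> degree (xm1 m :: 'a::field_gcd poly) = m"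
  by (rule order_antisym, rule degree_le) (auto simp: coeff_xm1 intro: le_degree)

lemma xm1_neq_0: "m > 0 \<Longrightarrow> xm1 m \<noteq> (0 :: 'a::field_gcd poly)"
  using degree_xm1[where 'a = 'a, of m] by auto

lemma reflect_xm1: "m > 0 \<Longrightarrow> reflect_poly (xm1 m :: 'a::field_gcd poly) = - xm1 m"
  by (rule poly_eqI) (auto simp: coeff_reflect_poly degree_xm1 coeff_xm1)

lemma coeff_0_neq_0_if_mult_eq_xm1:
  assumes "m > 0" and "g * h = (xm1 m :: 'a::field_gcd poly)"
  shows "coeff g 0 \<noteq> 0" and "coeff h 0 \<noteq> 0"
proof -
  have "coeff g 0 * coeff h 0 = -1"
    using assms by (simp add: coeff_xm1 flip: coeff_mult_0)
  then show "coeff g 0 \<noteq> 0" and "coeff h 0 \<noteq> 0"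
    by auto
qed

lemma cong_monom_mod: "[monom (c::'a::field_gcd) k = monom c (k mod m)] (mod xm1 m)"
proof -
  have "xm1 m dvd monom (1::'a) (m * j) - 1" for j
    using power_diff_1_eq[of "monom (1::'a) m" j] by (simp add: xm1_def monom_power mult.commute)
  then have "xm1 m dvd monom c (k mod m) * (monom (1::'a) (m * (k div m)) - 1)"
    by (rule dvd_mult)
  moreover have "monom c (k mod m) * (monom 1 (m * (k div m)) - 1) = monom c k - monom c (k mod m)"
    by (simp add: algebra_simps mult_monom)
  ultimately show ?thesis
    by (simp add: cong_iff_dvd_diff)
qed

lemma cong_monom: "[k = l] (mod m) \<Longrightarrow> [monom (c::'a::field_gcd) k = monom c l] (mod xm1 m)"
  using cong_monom_mod[of c k m] cong_monom_mod[of c l m] by (simp add: cong_def)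

lemma rep_eq_iff_cong: "rep m a = rep m b \<longleftrightarrow> [a = b] (mod xm1 m)"
  by (simp add: rep_def cong_def)

lemma cong_rep: "[rep m a = a] (mod xm1 m)"
  by (simp add: rep_def)

lemma rep_eq_self: "degree a < m \<Longrightarrow> rep m (a::'a::field_gcd poly) = a"
  unfolding rep_def by (rule mod_poly_less) (simp add: degree_xm1)

lemma degree_rep: "m > 0 \<Longrightarrow> degree (rep m (a::'a::field_gcd poly)) < m"
  unfolding rep_def by (metis degree_0 degree_mod_less' degree_xm1 xm1_neq_0)

lemma rep_monom: "m > 0 \<Longrightarrow> rep m (monom (c::'a::field_gcd) k) = monom c (k mod m)"
proof -
  assume "m > 0"
  have "rep m (monom c k) = rep m (monom c (k mod m))"
    using cong_monom_mod rep_eq_iff_cong by blast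
  also have "\<dots> = monom c (k mod m)"
    using \<open>m > 0\<close> by (intro rep_eq_self le_less_trans[OF degree_monom_le]) simp
  finally show ?thesis .
qed

lemma rep_sum: "rep m (\<Sum>i\<in>A. f i) = (\<Sum>i\<in>A. rep m (f i :: 'a::field_gcd poly))"
  by (induction A rule: infinite_finite_induct) (simp_all add: rep_def poly_mod_add_left)

lemma dvd_rep_iff: "g dvd xm1 m \<Longrightarrow> g dvd rep m a \<longleftrightarrow> g dvd (a::'a::field_gcd poly)"
  unfolding rep_def by (rule dvd_mod_iff)

lemma dvd_cong_iff:
  "g dvd xm1 m \<Longrightarrow> [a = b] (mod xm1 m) \<Longrightarrow> g dvd a \<longleftrightarrow> g dvd (b::'a::field_gcd poly)"
  unfolding cong_def by (metis dvd_mod_iff)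

lemma sum_monoms_lessThan: "degree p < m \<Longrightarrow> (\<Sum>i<m. monom (coeff p i) i) = p"
proof -
  assume "degree p < m"
  moreover from this have "{..<m} = {..m - 1}"
    by auto
  ultimately show ?thesis
    using poly_as_sum_of_monoms'[of p "m - 1"] by simp
qed

lemma pred_mult_add_self: "m > 0 \<Longrightarrow> (m - 1) * i + i = m * (i::nat)"
  by (cases m) simp_all

lemma cong_pred_mult:
  fixes m i :: nat
  assumes "m > 0" and "i \<le> m"
  shows "[(m - 1) * i = m - i] (mod m)"
proof -
  have "[(m - 1) * i + i = m - i + i] (mod m)"
    unfolding pred_mult_add_self[OF assms(1)] using assms(2) by (simp add: cong_def)
  then show ?thesis
    by (simp add: cong_add_rcancel_nat)
qed

lemma dvd_pred_mult_add_iff: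
  fixes m i j :: nat
  assumes "m > 0" "i < m" "j < m"
  shows "m dvd (m - 1) * i + j \<longleftrightarrow> j = i"
proof -
  have "[(m - 1) * i + i = 0] (mod m)"
    unfolding pred_mult_add_self[OF assms(1)] by (simp add: cong_def)
  then have "m dvd (m - 1) * i + j \<longleftrightarrow> [(m - 1) * i + j = (m - 1) * i + i] (mod m)"
    by (meson cong_0_iff cong_sym cong_trans)
  also have "\<dots> \<longleftrightarrow> [j = i] (mod m)"
    by (rule cong_add_lcancel_nat)
  also have "\<dots> \<longleftrightarrow> j = i"
    using assms by (simp add: cong_def)
  finally show ?thesis .
qed

(* x \<mapsto> x^(m-1), which is x \<mapsto> x^-1 modulo x^m - 1 *)
definition inv_subst :: "nat \<Rightarrow> 'a::field_gcd poly \<Rightarrow> 'a poly" where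
  "inv_subst m p = pcompose p (monom 1 (m - 1))"

lemma pcompose_monom: "pcompose (monom c i) y = smult (c::'a::comm_semiring_1) (y ^ i)"
  by (induction i) (simp_all add: monom_0 monom_Suc pcompose_pCons)

lemma inv_subst_monom: "inv_subst m (monom c i) = monom (c::'a::field_gcd) ((m - 1) * i)"
  by (simp add: inv_subst_def pcompose_monom monom_power smult_monom mult.commute)

lemma inv_subst_add: "inv_subst m (a + b) = inv_subst m a + inv_subst m (b::'a::field_gcd poly)"
  by (simp add: inv_subst_def pcompose_add)

lemma inv_subst_mult: "inv_subst m (a * b) = inv_subst m a * inv_subst m (b::'a::field_gcd poly)"
  by (simp add: inv_subst_def pcompose_mult)

lemma inv_subst_sum: "inv_subst m (\<Sum>i\<in>A. f i) = (\<Sum>i\<in>A. inv_subst m (f i :: 'a::field_gcd poly))"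
  by (simp add: inv_subst_def pcompose_sum)

lemma cong_pcompose:
  "[y = z] (mod n) \<Longrightarrow> [pcompose p y = pcompose p (z::'a::field poly)] (mod n)"
  by (induction p) (simp_all add: pcompose_pCons cong_add cong_mult)

lemma xm1_dvd_inv_subst_xm1: "xm1 m dvd inv_subst m (xm1 m :: 'a::field_gcd poly)"
proof -
  have "inv_subst m (xm1 m) = monom 1 ((m - 1) * m) - (1::'a poly)"
    by (simp add: xm1_def inv_subst_def pcompose_diff pcompose_1 pcompose_monom monom_power
        mult.commute)
  moreover have "[monom (1::'a) ((m - 1) * m) = monom 1 0] (mod xm1 m)"
    by (rule cong_monom) (simp add: cong_def)
  ultimately show ?thesis
    by (simp add: cong_iff_dvd_diff)
qed

lemma inv_subst_cong:
  assumes "m > 0" and "[a = b] (mod xm1 m)"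
  shows "[inv_subst m a = inv_subst m (b::'a::field_gcd poly)] (mod xm1 m)"
proof -
  obtain k where k: "a - b = xm1 m * k"
    using assms(2) by (auto simp: cong_iff_dvd_diff)
  have "inv_subst m a - inv_subst m b = inv_subst m (xm1 m) * inv_subst m k"
    by (simp add: inv_subst_def flip: pcompose_diff pcompose_mult k)
  then show ?thesis
    using dvd_mult2[OF xm1_dvd_inv_subst_xm1] by (simp add: cong_iff_dvd_diff)
qed

lemma inv_subst_inv_subst:
  assumes "m > 0"
  shows "[inv_subst m (inv_subst m a) = (a::'a::field_gcd poly)] (mod xm1 m)"
proof -
  have "inv_subst m (inv_subst m a) = pcompose a (monom 1 ((m - 1) * (m - 1)))"
    by (simp add: inv_subst_def pcompose_monom monom_power smult_monom flip: pcompose_assoc)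
  also have "[\<dots> = pcompose a (monom 1 1)] (mod xm1 m)"
    using cong_pred_mult[OF assms, of "m - 1"] assms by (intro cong_pcompose cong_monom) simp
  also have "pcompose a (monom 1 1) = a"
    by (simp add: monom_Suc monom_0)
  finally show ?thesis .
qed

lemma cbar_eq_rep_inv_subst: "m > 0 \<Longrightarrow> cbar m a = rep m (inv_subst m (a::'a::field_gcd poly))"
proof -
  assume m: "m > 0"
  let ?r = "rep m a"
  have "[(m - i) mod m = (m - 1) * i] (mod m)" if "i < m" for i
    using cong_pred_mult[OF m, of i] that by (simp add: cong_sym_eq)
  then have "[(\<Sum>i<m. monom (coeff ?r i) ((m - i) mod m)) = (\<Sum>i<m. monom (coeff ?r i) ((m - 1) * i))]
      (mod xm1 m)"
    by (intro cong_sum cong_monom) simp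
  also have "(\<Sum>i<m. monom (coeff ?r i) ((m - 1) * i)) = inv_subst m (\<Sum>i<m. monom (coeff ?r i) i)"
    by (simp add: inv_subst_sum inv_subst_monom)
  also have "(\<Sum>i<m. monom (coeff ?r i) i) = ?r"
    by (rule sum_monoms_lessThan[OF degree_rep[OF m]])
  also have "[inv_subst m ?r = inv_subst m a] (mod xm1 m)"
    by (intro inv_subst_cong m cong_rep)
  finally show ?thesis
    by (simp add: cbar_def rep_eq_iff_cong)
qed

lemma monom_mult_inv_subst_cong_reflect:
  assumes "m > 0"
  shows "[monom 1 (degree p) * inv_subst m p = reflect_poly (p::'a::field_gcd poly)] (mod xm1 m)"
proof (induction p rule: pCons_induct)
  case (pCons c p)
  show ?case
  proof (cases "p = 0")
    case False
    let ?d = "degree p"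
    have "[monom (1::'a) (?d + m) = monom 1 ?d] (mod xm1 m)"
      by (intro cong_monom) (simp add: cong_def)
    then have "[monom 1 (?d + m) * inv_subst m p = monom 1 ?d * inv_subst m p] (mod xm1 m)"
      by (rule cong_scalar_right)
    also have "[monom 1 ?d * inv_subst m p = reflect_poly p] (mod xm1 m)"
      by (fact pCons.IH)
    finally have "[monom 1 (?d + m) * inv_subst m p + monom c (Suc ?d)
        = reflect_poly p + monom c (Suc ?d)] (mod xm1 m)"
      by (rule cong_add[OF _ cong_refl])
    moreover have "monom 1 (degree (pCons c p)) * inv_subst m (pCons c p)
        = monom 1 (?d + m) * inv_subst m p + monom c (Suc ?d)"
      using False assms
      by (simp add: inv_subst_def pcompose_pCons algebra_simps mult_monom flip: monom_0)
    ultimately show ?thesis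
      using False by (simp add: reflect_poly_pCons')
  qed (simp add: inv_subst_def)
qed (simp add: inv_subst_def)

lemma xm1_dvd_monom_mult_iff:
  assumes "m > 0"
  shows "xm1 m dvd monom 1 d * w \<longleftrightarrow> xm1 m dvd (w::'a::field_gcd poly)"
proof -
  have "[monom (1::'a) (m * d) * w = monom 1 0 * w] (mod xm1 m)"
    by (intro cong_scalar_right cong_monom) (simp add: cong_def)
  then have "[monom 1 ((m - 1) * d) * (monom 1 d * w) = w] (mod xm1 m)"
    using pred_mult_add_self[OF assms, of d] by (simp add: mult.assoc[symmetric] mult_monom)
  then have "xm1 m dvd monom 1 ((m - 1) * d) * (monom 1 d * w) \<longleftrightarrow> xm1 m dvd w"
    by (rule cong_dvd_iff)
  then show ?thesis
    using dvd_mult by blast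
qed

lemma xm1_dvd_mult_inv_subst_iff:
  assumes "m > 0" and "A * B = (xm1 m :: 'a::field_gcd poly)"
  shows "xm1 m dvd c * inv_subst m A \<longleftrightarrow> reflect_poly B dvd c"
proof -
  have "xm1 m dvd c * inv_subst m A \<longleftrightarrow> xm1 m dvd monom 1 (degree A) * (c * inv_subst m A)"
    using xm1_dvd_monom_mult_iff[OF assms(1)] by blast
  also have "\<dots> \<longleftrightarrow> xm1 m dvd c * reflect_poly A"
    using cong_scalar_left[OF monom_mult_inv_subst_cong_reflect[OF assms(1), of A], of c]
    by (simp add: cong_dvd_iff mult.left_commute)
  also have "\<dots> \<longleftrightarrow> reflect_poly A * reflect_poly B dvd reflect_poly A * c"
    using assms by (simp add: reflect_xm1 mult.commute flip: reflect_poly_mult)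
  also have "\<dots> \<longleftrightarrow> reflect_poly B dvd c"
    using assms xm1_neq_0[of m] by (auto simp: dvd_times_left_cancel_iff)
  finally show ?thesis .
qed

section \<open>Quasi-cyclic codes as divisibility conditions\<close>

lemma qc_code_mem_iff:
  assumes "(a, b) \<in> ambient m" and "g1 dvd xm1 m" and "g2 dvd xm1 m"
  shows "(a, b) \<in> qc_code m g1 (v * g1) 0 g2 \<longleftrightarrow> g1 dvd a \<and> g2 dvd b - a * (v::'a::field_gcd poly)"
proof
  assume "(a, b) \<in> qc_code m g1 (v * g1) 0 g2"
  then obtain r1 r2 where a: "a = rep m (r1 * g1)" and b: "b = rep m (r1 * (v * g1) + r2 * g2)"
    by (auto simp: qc_code_def)
  have "[b - a * v = (r1 * (v * g1) + r2 * g2) - r1 * g1 * v] (mod xm1 m)"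
    unfolding a b by (intro cong_diff cong_mult cong_rep cong_refl)
  then have "[b - a * v = g2 * r2] (mod xm1 m)"
    by (simp add: algebra_simps)
  then show "g1 dvd a \<and> g2 dvd b - a * v"
    using assms(2,3) by (simp add: a dvd_rep_iff dvd_cong_iff)
next
  assume "g1 dvd a \<and> g2 dvd b - a * v"
  then obtain r1 r2 where r1: "a = g1 * r1" and r2: "b - a * v = g2 * r2"
    by (auto elim!: dvdE)
  have "a = rep m (r1 * g1 + r2 * 0)" and "b = rep m (r1 * (v * g1) + r2 * g2)"
    using assms(1) r1 r2 by (simp_all add: ambient_def rep_eq_self algebra_simps eq_diff_eq)
  then show "(a, b) \<in> qc_code m g1 (v * g1) 0 g2"
    unfolding qc_code_def by blast
qed

lemma ball_ambient_iff_all: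
  assumes "m > 0" and "\<And>a b. P (rep m a) (rep m b) \<longleftrightarrow> P a (b::'a::field_gcd poly)"
  shows "(\<forall>(a, b) \<in> ambient m. P a b) \<longleftrightarrow> (\<forall>a b. P a b)"
  using assms degree_rep[OF assms(1)] unfolding ambient_def by fastforce

(* Necessity: test the pairs (P1, 0) and (-P2 * V, P2). Sufficiency: every admissible pair
   is a combination (P1 * t - P2 * V * s, P2 * s) of them. *)
lemma dvd_module_inclusion_iff:
  fixes P1 P2 V g1 g2 v :: "'a::comm_ring_1"
  assumes transfer: "g1 dvd P2 * V \<Longrightarrow> g2 dvd P1 * v"
  shows "(\<forall>a b. P1 dvd a + b * V \<and> P2 dvd b \<longrightarrow> g1 dvd a \<and> g2 dvd b - a * v)
    \<longleftrightarrow> g1 dvd P1 \<and> g1 dvd P2 * V \<and> g2 dvd P2 * (1 + v * V)" (is "?incl \<longleftrightarrow> ?conds")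
proof
  assume incl: ?incl
  have "g1 dvd P1"
    using incl[rule_format, of P1 0] by simp
  moreover have "g1 dvd P2 * V \<and> g2 dvd P2 * (1 + v * V)"
    using incl[rule_format, of "- (P2 * V)" P2] by (simp add: algebra_simps)
  ultimately show ?conds
    by blast
next
  assume ?conds
  then have c1: "g1 dvd P1" and c2: "g1 dvd P2 * V" and c3: "g2 dvd P2 * (1 + v * V)"
    by auto
  show ?incl
  proof (intro allI impI)
    fix a b
    assume "P1 dvd a + b * V \<and> P2 dvd b"
    then obtain s t where b: "b = P2 * s" and "a + b * V = P1 * t"
      by (auto elim!: dvdE)
    then have a: "a = P1 * t - P2 * V * s"
      by (simp add: algebra_simps eq_diff_eq)
    have "b - a * v = P2 * (1 + v * V) * s - P1 * v * t"
      by (simp add: a b algebra_simps)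
    then show "g1 dvd a \<and> g2 dvd b - a * v"
      using c1 c2 c3 transfer[OF c2] by (simp add: a dvd_diff dvd_mult2)
  qed
qed

section \<open>Frobenius and Hermitian conjugation\<close>

definition hconj :: "nat \<Rightarrow> nat \<Rightarrow> 'a::field_gcd poly \<Rightarrow> 'a poly" where
  "hconj q m a = frob q (cbar m a)"

context
  fixes q :: nat
  assumes power_q_add: "\<And>x y::'a::field_gcd. (x + y) ^ q = x ^ q + y ^ q"
    and power_q_power_q: "\<And>x::'a. (x ^ q) ^ q = x"
begin

lemma q_pos: "q > 0"
  using power_q_power_q[of 0] by (cases q) simp_all

lemma power_q_uminus: "(- x :: 'a) ^ q = - (x ^ q)"
  using power_q_add[of x "- x"] q_pos by (simp add: zero_power eq_neg_iff_add_eq_0 add.commute)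

lemma coeff_frob: "coeff (frob q p) n = (coeff p n :: 'a) ^ q"
  using q_pos by (simp add: frob_def coeff_map_poly)

lemma degree_frob: "degree (frob q (p::'a poly)) = degree p"
  using q_pos unfolding frob_def by (intro degree_map_poly) simp

lemma frob_add: "frob q (a + b) = frob q a + frob q (b::'a poly)"
  by (rule poly_eqI) (simp add: coeff_frob power_q_add)

lemma frob_uminus: "frob q (- a) = - frob q (a::'a poly)"
  by (rule poly_eqI) (simp add: coeff_frob power_q_uminus)

lemma frob_diff: "frob q (a - b) = frob q a - frob q (b::'a poly)"
  using frob_add[of a "- b"] by (simp add: frob_uminus)

lemma frob_pCons: "frob q (pCons c a) = pCons (c ^ q) (frob q (a::'a poly))"
  using q_pos by (intro poly_eqI) (simp add: coeff_frob coeff_pCons split: nat.split)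

lemma frob_smult: "frob q (smult c a) = smult (c ^ q) (frob q (a::'a poly))"
  by (rule poly_eqI) (simp add: coeff_frob power_mult_distrib)

lemma frob_mult: "frob q (a * b) = frob q a * frob q (b::'a poly)"
proof (induction a)
  case (pCons c a)
  show ?case
    using q_pos by (simp add: frob_add frob_smult frob_pCons pCons.IH)
qed (simp add: frob_def)

lemma frob_frob: "frob q (frob q a) = (a::'a poly)"
  by (rule poly_eqI) (simp add: coeff_frob power_q_power_q)

lemma frob_monom: "frob q (monom c n) = monom ((c::'a) ^ q) n"
  using q_pos by (simp add: frob_def map_poly_monom)

lemma frob_xm1: "frob q (xm1 m) = (xm1 m :: 'a poly)"
  by (simp add: xm1_def frob_diff frob_monom) (simp add: frob_def)

lemma frob_pcompose: "frob q (pcompose p y) = pcompose (frob q p) (frob q (y::'a poly))"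
proof (induction p)
  case (pCons c p)
  show ?case
    using q_pos by (simp add: pcompose_pCons frob_pCons frob_add frob_mult pCons.IH frob_monom
        flip: monom_0)
qed (simp add: frob_def)

lemma frob_inv_subst: "frob q (inv_subst m a) = inv_subst m (frob q (a::'a poly))"
  by (simp add: inv_subst_def frob_pcompose frob_monom)

lemma frob_reflect: "frob q (reflect_poly p) = reflect_poly (frob q (p::'a poly))"
  by (rule poly_eqI) (simp add: coeff_frob coeff_reflect_poly degree_frob q_pos)

lemma frob_mult_eq_xm1: "g * h = xm1 m \<Longrightarrow> frob q g * frob q h = (xm1 m :: 'a poly)"
  by (metis frob_mult frob_xm1)

lemma frob_cong: "[a = b] (mod xm1 m) \<Longrightarrow> [frob q a = frob q (b::'a poly)] (mod xm1 m)"
  by (metis cong_iff_dvd_diff dvd_def frob_diff frob_mult frob_xm1)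


context
  fixes m :: nat
  assumes m_pos: "m > 0"
begin

lemma hconj_cong_inv_subst_frob: "[hconj q m a = inv_subst m (frob q (a::'a poly))] (mod xm1 m)"
proof -
  have "[frob q (rep m (inv_subst m a)) = frob q (inv_subst m a)] (mod xm1 m)"
    by (intro frob_cong cong_rep)
  then show ?thesis
    by (simp add: hconj_def cbar_eq_rep_inv_subst[OF m_pos] frob_inv_subst)
qed

lemma hconj_eqI: "[a = b] (mod xm1 m) \<Longrightarrow> hconj q m a = hconj q m (b::'a poly)"
  by (simp add: hconj_def cbar_def flip: rep_eq_iff_cong)

lemma hconj_0: "hconj q m 0 = (0::'a poly)"
  by (simp add: hconj_def cbar_def rep_def frob_def)

lemma hconj_add: "[hconj q m (a + b) = hconj q m a + hconj q m (b::'a poly)] (mod xm1 m)"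
proof -
  have "[hconj q m (a + b) = inv_subst m (frob q a) + inv_subst m (frob q b)] (mod xm1 m)"
    using hconj_cong_inv_subst_frob[of "a + b"] by (simp add: frob_add inv_subst_add)
  also have "[inv_subst m (frob q a) + inv_subst m (frob q b) = hconj q m a + hconj q m b]
      (mod xm1 m)"
    by (intro cong_add cong_sym[OF hconj_cong_inv_subst_frob])
  finally show ?thesis .
qed

lemma hconj_mult: "[hconj q m (a * b) = hconj q m a * hconj q m (b::'a poly)] (mod xm1 m)"
proof -
  have "[hconj q m (a * b) = inv_subst m (frob q a) * inv_subst m (frob q b)] (mod xm1 m)"
    using hconj_cong_inv_subst_frob[of "a * b"] by (simp add: frob_mult inv_subst_mult)
  also have "[inv_subst m (frob q a) * inv_subst m (frob q b) = hconj q m a * hconj q m b]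
      (mod xm1 m)"
    by (intro cong_mult cong_sym[OF hconj_cong_inv_subst_frob])
  finally show ?thesis .
qed

lemma hconj_hconj: "[hconj q m (hconj q m a) = (a::'a poly)] (mod xm1 m)"
proof -
  have "hconj q m (hconj q m a) = hconj q m (inv_subst m (frob q a))"
    by (rule hconj_eqI[OF hconj_cong_inv_subst_frob])
  also have "[\<dots> = inv_subst m (frob q (inv_subst m (frob q a)))] (mod xm1 m)"
    by (rule hconj_cong_inv_subst_frob)
  also have "inv_subst m (frob q (inv_subst m (frob q a))) = inv_subst m (inv_subst m a)"
    by (simp add: frob_inv_subst frob_frob)
  also have "[inv_subst m (inv_subst m a) = a] (mod xm1 m)"
    by (rule inv_subst_inv_subst[OF m_pos])
  finally show ?thesis .
qed

lemma xm1_dvd_hconj_iff: "xm1 m dvd hconj q m a \<longleftrightarrow> xm1 m dvd (a::'a poly)"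
proof
  assume "xm1 m dvd hconj q m a"
  then have "hconj q m (hconj q m a) = 0"
    using hconj_eqI[of "hconj q m a" 0] by (simp add: hconj_0 cong_0_iff)
  then have "[a = 0] (mod xm1 m)"
    using hconj_hconj[of a] by (simp add: cong_sym_eq)
  then show "xm1 m dvd a"
    by (simp add: cong_0_iff)
next
  assume "xm1 m dvd a"
  then show "xm1 m dvd hconj q m a"
    using hconj_eqI[of a 0] by (simp add: hconj_0 cong_0_iff)
qed

lemma xm1_dvd_hconj_mult_iff:
  assumes "A * B = xm1 m"
  shows "xm1 m dvd hconj q m b * A \<longleftrightarrow> reflect_poly (frob q B) dvd (b::'a poly)"
proof -
  have "[hconj q m (hconj q m b * A) = hconj q m (hconj q m b) * hconj q m A] (mod xm1 m)"
    by (rule hconj_mult)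
  also have "[hconj q m (hconj q m b) * hconj q m A = b * inv_subst m (frob q A)] (mod xm1 m)"
    by (intro cong_mult hconj_hconj hconj_cong_inv_subst_frob)
  finally have conj: "[hconj q m (hconj q m b * A) = b * inv_subst m (frob q A)] (mod xm1 m)" .
  have "xm1 m dvd hconj q m b * A \<longleftrightarrow> xm1 m dvd hconj q m (hconj q m b * A)"
    by (rule xm1_dvd_hconj_iff[symmetric])
  also have "\<dots> \<longleftrightarrow> xm1 m dvd b * inv_subst m (frob q A)"
    by (rule cong_dvd_iff[OF conj])
  also have "\<dots> \<longleftrightarrow> reflect_poly (frob q B) dvd b"
    using assms by (intro xm1_dvd_mult_inv_subst_iff m_pos frob_mult_eq_xm1)
  finally show ?thesis .
qed

lemma cperpH_eq:
  assumes "lead_coeff g = 1" and "g * h = xm1 m"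
  shows "cperpH q m g = smult (inverse (coeff h 0 ^ q)) (reflect_poly (frob q (h::'a poly)))"
proof -
  have gh: "frob q g * frob q h = xm1 m"
    using assms(2) by (rule frob_mult_eq_xm1)
  have "gcd (rep m (frob q g)) (xm1 m) = gcd (frob q g) (xm1 m)"
    unfolding rep_def using xm1_neq_0[OF m_pos] by (rule gcd_mod_left)
  also have "\<dots> = normalize (frob q g)"
    using gh by (intro gcd_proj1_if_dvd) (metis dvd_triv_left)
  also have "\<dots> = frob q g"
    using assms(1) by (simp add: normalize_poly_def coeff_frob degree_frob flip: one_pCons)
  finally have "gcd (rep m (frob q g)) (xm1 m) = frob q g" .
  moreover have "frob q g \<noteq> 0"
    using gh xm1_neq_0[OF m_pos] by auto
  then have "xm1 m div frob q g = frob q h"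
    by (simp flip: gh)
  ultimately show ?thesis
    by (simp add: cperpH_def cperp_def coeff_frob)
qed

lemma cperpH_dvd_iff:
  assumes "lead_coeff g = 1" and "g dvd xm1 m"
  shows "cperpH q m g dvd b \<longleftrightarrow> xm1 m dvd hconj q m b * (g::'a poly)"
proof -
  obtain h where h: "g * h = xm1 m"
    using assms(2) by (metis dvdE)
  have "coeff h 0 \<noteq> 0"
    by (rule coeff_0_neq_0_if_mult_eq_xm1(2)[OF m_pos h])
  then show ?thesis
    using cperpH_eq[OF assms(1) h] xm1_dvd_hconj_mult_iff[OF h] q_pos by (simp add: smult_dvd_iff)
qed

lemma cperpH_dvd_xm1: "lead_coeff g = 1 \<Longrightarrow> g dvd xm1 m \<Longrightarrow> cperpH q m g dvd (xm1 m :: 'a poly)"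
  by (simp add: cperpH_dvd_iff xm1_dvd_hconj_iff dvd_mult2)

(* cperpH g times a nonzero multiple of reflect_poly (frob q g) is x^m - 1, so g plays the role
   of the Hermitian perp of cperpH g. *)
lemma dvd_iff_xm1_dvd_hconj_mult_cperpH:
  assumes "lead_coeff g = 1" and "g dvd xm1 m"
  shows "g dvd c \<longleftrightarrow> xm1 m dvd hconj q m c * cperpH q m (g::'a poly)"
proof -
  obtain h where h: "g * h = xm1 m"
    using assms(2) by (metis dvdE)
  define u where "u = inverse (coeff h 0 ^ q)"
  have u: "u \<noteq> 0"
    using coeff_0_neq_0_if_mult_eq_xm1(2)[OF m_pos h] by (simp add: u_def)
  define w where "w = - inverse u"
  have w: "w \<noteq> 0"
    using u by (simp add: w_def)
  define B where "B = smult w (reflect_poly (frob q g))"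
  have "cperpH q m g * B = smult (u * w) (reflect_poly (frob q g * frob q h))"
    by (simp add: cperpH_eq[OF assms(1) h, folded u_def] B_def reflect_poly_mult mult.commute)
  also have "\<dots> = xm1 m"
    using u by (simp add: w_def frob_mult_eq_xm1[OF h] reflect_xm1[OF m_pos])
  finally have "xm1 m dvd hconj q m c * cperpH q m g \<longleftrightarrow> reflect_poly (frob q B) dvd c"
    by (rule xm1_dvd_hconj_mult_iff)
  moreover have "reflect_poly (frob q B) = smult (w ^ q) g"
    using coeff_0_neq_0_if_mult_eq_xm1(1)[OF m_pos h]
    by (simp add: B_def frob_smult frob_reflect frob_frob reflect_poly_smult)
  ultimately show ?thesis
    using w by (simp add: smult_dvd_iff)
qed


section \<open>Hermitian duals of quasi-cyclic codes\<close>

lemma sum_power_q_mult_eq_coeff_0: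
  fixes a c :: "'a poly"
  assumes "degree a < m" and "degree c < m"
  shows "(\<Sum>i<m. coeff a i ^ q * coeff c i) = coeff (rep m (hconj q m a * c)) 0"
proof -
  have fa: "(\<Sum>i<m. monom (coeff a i ^ q) i) = frob q a"
    using sum_monoms_lessThan[of "frob q a" m] assms(1) by (simp add: degree_frob coeff_frob)
  have "rep m (hconj q m a * c) = rep m (inv_subst m (frob q a) * c)"
    by (simp add: rep_eq_iff_cong cong_scalar_right hconj_cong_inv_subst_frob)
  also have "inv_subst m (frob q a) * c
      = (\<Sum>i<m. monom (coeff a i ^ q) ((m - 1) * i)) * (\<Sum>j<m. monom (coeff c j) j)"
    unfolding fa[symmetric]
    by (simp add: inv_subst_sum inv_subst_monom sum_monoms_lessThan[OF assms(2)])
  also have "\<dots> = (\<Sum>i<m. \<Sum>j<m. monom (coeff a i ^ q * coeff c j) ((m - 1) * i + j))"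
    by (simp add: sum_product mult_monom)
  finally have "coeff (rep m (hconj q m a * c)) 0
      = (\<Sum>i<m. \<Sum>j<m. if m dvd (m - 1) * i + j then coeff a i ^ q * coeff c j else 0)"
    using m_pos by (simp add: rep_sum rep_monom coeff_sum coeff_monom dvd_eq_mod_eq_0 eq_commute[of 0])
  also have "\<dots> = (\<Sum>i<m. \<Sum>j<m. if j = i then coeff a i ^ q * coeff c j else 0)"
    by (intro sum.cong refl) (use dvd_pred_mult_add_iff[OF m_pos] in auto)
  also have "\<dots> = (\<Sum>i<m. coeff a i ^ q * coeff c i)"
    by (simp add: sum.delta)
  finally show ?thesis ..
qed

lemma xm1_dvd_iff_coeff_0_rep_mult:
  "xm1 m dvd w \<longleftrightarrow> (\<forall>r. coeff (rep m (r * w)) 0 = (0::'a))"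
proof
  assume "xm1 m dvd w"
  then show "\<forall>r. coeff (rep m (r * w)) 0 = 0"
    by (simp add: rep_def)
next
  assume vanish: "\<forall>r. coeff (rep m (r * w)) 0 = 0"
  have "coeff (rep m w) j = 0" for j
  proof (cases "j < m")
    case True
    have "coeff (rep m w) j = (\<Sum>i<m. if i = j then coeff (rep m w) i else 0)"
      using True by simp
    also have "\<dots> = (\<Sum>i<m. coeff (monom 1 j) i ^ q * coeff (rep m w) i)"
      using q_pos by (intro sum.cong) (simp_all add: coeff_monom)
    also have "\<dots> = coeff (rep m (hconj q m (monom 1 j) * rep m w)) 0"
      using True degree_rep[OF m_pos]
      by (intro sum_power_q_mult_eq_coeff_0) (simp_all add: degree_monom_eq)
    also have "rep m (hconj q m (monom 1 j) * rep m w) = rep m (hconj q m (monom 1 j) * w)"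
      by (simp add: rep_eq_iff_cong cong_scalar_left cong_rep)
    finally show ?thesis
      using vanish by simp
  next
    case False
    then show ?thesis
      using degree_rep[OF m_pos, of w] by (simp add: coeff_eq_0)
  qed
  then have "rep m w = 0"
    by (simp add: poly_eq_iff)
  then show "xm1 m dvd w"
    by (simp add: rep_def dvd_eq_mod_eq_0)
qed

lemma herm_qc_code_element_eq:
  assumes "(a, b) \<in> ambient m"
  shows "herm q m (a, b) (rep m (r1 * u11 + r2 * u21), rep m (r1 * u12 + r2 * u22))
    = coeff (rep m (r1 * (hconj q m a * u11 + hconj q m b * u12)
        + r2 * (hconj q m a * u21 + hconj q m b * (u22::'a poly)))) 0"
proof -
  let ?c = "r1 * u11 + r2 * u21" and ?d = "r1 * u12 + r2 * u22"
  have "herm q m (a, b) (rep m ?c, rep m ?d)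
      = (\<Sum>i<m. coeff a i ^ q * coeff (rep m ?c) i) + (\<Sum>i<m. coeff b i ^ q * coeff (rep m ?d) i)"
    by (simp add: herm_def)
  also have "\<dots> = coeff (rep m (hconj q m a * rep m ?c)) 0 + coeff (rep m (hconj q m b * rep m ?d)) 0"
    using assms degree_rep[OF m_pos] unfolding ambient_def
    by (intro arg_cong2[where f = "(+)"] sum_power_q_mult_eq_coeff_0) auto
  also have "\<dots> = coeff (rep m (hconj q m a * rep m ?c + hconj q m b * rep m ?d)) 0"
    by (simp add: rep_def poly_mod_add_left)
  also have "rep m (hconj q m a * rep m ?c + hconj q m b * rep m ?d)
      = rep m (hconj q m a * ?c + hconj q m b * ?d)"
    by (simp add: rep_eq_iff_cong cong_add cong_scalar_left cong_rep)
  also have "hconj q m a * ?c + hconj q m b * ?d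
      = r1 * (hconj q m a * u11 + hconj q m b * u12) + r2 * (hconj q m a * u21 + hconj q m b * u22)"
    by (simp add: algebra_simps)
  finally show ?thesis .
qed

lemma herm_dual_qc_code_iff:
  "(a, b) \<in> herm_dual q m (qc_code m u11 u12 u21 u22) \<longleftrightarrow>
     (a, b) \<in> ambient m \<and> xm1 m dvd hconj q m a * u11 + hconj q m b * u12
       \<and> xm1 m dvd hconj q m a * u21 + hconj q m b * (u22::'a poly)"
proof -
  define W1 where "W1 = hconj q m a * u11 + hconj q m b * u12"
  define W2 where "W2 = hconj q m a * u21 + hconj q m b * u22"
  have coeff_split: "coeff (rep m (r1 * W1 + r2 * W2)) 0
      = coeff (rep m (r1 * W1)) 0 + coeff (rep m (r2 * W2)) 0" for r1 r2
    by (simp add: rep_def poly_mod_add_left)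
  have "(a, b) \<in> herm_dual q m (qc_code m u11 u12 u21 u22) \<longleftrightarrow> (a, b) \<in> ambient m \<and>
      (\<forall>r1 r2. herm q m (a, b) (rep m (r1 * u11 + r2 * u21), rep m (r1 * u12 + r2 * u22)) = 0)"
    unfolding herm_dual_def qc_code_def by blast
  also have "\<dots> \<longleftrightarrow> (a, b) \<in> ambient m \<and> (\<forall>r1 r2. coeff (rep m (r1 * W1 + r2 * W2)) 0 = 0)"
    by (auto simp: herm_qc_code_element_eq W1_def W2_def)
  also have "(\<forall>r1 r2. coeff (rep m (r1 * W1 + r2 * W2)) 0 = 0) \<longleftrightarrow>
      (\<forall>r. coeff (rep m (r * W1)) 0 = 0) \<and> (\<forall>r. coeff (rep m (r * W2)) 0 = 0)"
  proof (intro iffI conjI allI)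
    fix r
    assume vanish: "\<forall>r1 r2. coeff (rep m (r1 * W1 + r2 * W2)) 0 = 0"
    show "coeff (rep m (r * W1)) 0 = 0"
      using vanish[rule_format, of r 0] by (simp add: coeff_split rep_def)
    show "coeff (rep m (r * W2)) 0 = 0"
      using vanish[rule_format, of 0 r] by (simp add: coeff_split rep_def)
  qed (simp add: coeff_split)
  finally show ?thesis
    by (simp add: W1_def W2_def flip: xm1_dvd_iff_coeff_0_rep_mult)
qed

lemma herm_dual_qc_code_mem_iff:
  assumes "lead_coeff g1 = 1" "g1 dvd xm1 m" "lead_coeff g2 = 1" "g2 dvd xm1 m"
  shows "(a, b) \<in> herm_dual q m (qc_code m g1 (v * g1) 0 g2) \<longleftrightarrow>
    (a, b) \<in> ambient m \<and> cperpH q m g1 dvd a + b * hconj q m v \<and> cperpH q m g2 dvd (b::'a poly)"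
proof -
  have "[hconj q m (a + b * hconj q m v) = hconj q m a + hconj q m (b * hconj q m v)] (mod xm1 m)"
    by (rule hconj_add)
  also have "[hconj q m a + hconj q m (b * hconj q m v) = hconj q m a + hconj q m b * v] (mod xm1 m)"
    using hconj_mult[of b "hconj q m v"] hconj_hconj[of v]
    by (intro cong_add cong_refl) (metis cong_scalar_left cong_trans)
  finally have "[hconj q m (a + b * hconj q m v) * g1 = (hconj q m a + hconj q m b * v) * g1]
      (mod xm1 m)"
    by (rule cong_scalar_right)
  then have "[hconj q m (a + b * hconj q m v) * g1 = hconj q m a * g1 + hconj q m b * (v * g1)]
      (mod xm1 m)"
    by (simp add: algebra_simps)
  then have "cperpH q m g1 dvd a + b * hconj q m v
      \<longleftrightarrow> xm1 m dvd hconj q m a * g1 + hconj q m b * (v * g1)"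
    by (simp add: cperpH_dvd_iff[OF assms(1,2)] cong_dvd_iff)
  then show ?thesis
    by (simp add: herm_dual_qc_code_iff cperpH_dvd_iff[OF assms(3,4)])
qed

lemma dvd_cperpH_mult_transfer:
  assumes "lead_coeff g1 = 1" "g1 dvd xm1 m" "lead_coeff g2 = 1" "g2 dvd xm1 m"
    and "g1 dvd cperpH q m g2 * hconj q m v"
  shows "g2 dvd cperpH q m g1 * (v::'a poly)"
proof -
  let ?P1 = "cperpH q m g1" and ?P2 = "cperpH q m g2"
  have "xm1 m dvd hconj q m ?P1 * g1"
    by (simp add: cperpH_dvd_iff[OF assms(1,2), symmetric])
  then have "xm1 m dvd hconj q m ?P1 * (?P2 * hconj q m v)"
    using assms(5) by (meson dvd_trans mult_dvd_mono dvd_refl)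
  moreover have "[hconj q m (?P1 * v) * ?P2 = hconj q m ?P1 * (?P2 * hconj q m v)] (mod xm1 m)"
    using cong_scalar_right[OF hconj_mult[of ?P1 v], of ?P2] by (simp add: algebra_simps)
  ultimately have "xm1 m dvd hconj q m (?P1 * v) * ?P2"
    by (simp add: cong_dvd_iff)
  then show ?thesis
    by (simp add: dvd_iff_xm1_dvd_hconj_mult_cperpH[OF assms(3,4)])
qed

lemma herm_dual_containing_qc_code_iff:
  assumes "lead_coeff g1 = 1" "g1 dvd xm1 m" "lead_coeff g2 = 1" "g2 dvd xm1 m"
  shows "herm_dual_containing q m (qc_code m g1 (v * g1) 0 g2) \<longleftrightarrow>
    g1 dvd cperpH q m g1 \<and> g1 dvd cperpH q m g2 * hconj q m v
    \<and> g2 dvd cperpH q m g2 * (1 + v * hconj q m (v::'a poly))"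
proof -
  let ?P1 = "cperpH q m g1" and ?P2 = "cperpH q m g2" and ?V = "hconj q m v"
  let ?incl = "\<lambda>a b. ?P1 dvd a + b * ?V \<and> ?P2 dvd b \<longrightarrow> g1 dvd a \<and> g2 dvd b - a * v"
  have P1: "?P1 dvd xm1 m" and P2: "?P2 dvd xm1 m"
    using assms by (simp_all add: cperpH_dvd_xm1)
  have "herm_dual_containing q m (qc_code m g1 (v * g1) 0 g2) \<longleftrightarrow> (\<forall>(a, b) \<in> ambient m. ?incl a b)"
    unfolding herm_dual_containing_def subset_iff
    using herm_dual_qc_code_mem_iff[OF assms] qc_code_mem_iff[OF _ assms(2,4)] by auto
  also have "\<dots> \<longleftrightarrow> (\<forall>a b. ?incl a b)"
  proof (rule ball_ambient_iff_all[OF m_pos])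
    fix a b
    have "[rep m a + rep m b * ?V = a + b * ?V] (mod xm1 m)"
      and "[rep m b - rep m a * v = b - a * v] (mod xm1 m)"
      by (intro cong_add cong_diff cong_mult cong_rep cong_refl)+
    then show "?incl (rep m a) (rep m b) \<longleftrightarrow> ?incl a b"
      using P1 P2 assms(2,4) by (simp add: dvd_cong_iff dvd_rep_iff)
  qed
  also have "\<dots> \<longleftrightarrow> g1 dvd ?P1 \<and> g1 dvd ?P2 * ?V \<and> g2 dvd ?P2 * (1 + v * ?V)"
    by (intro dvd_module_inclusion_iff dvd_cperpH_mult_transfer[OF assms])
  finally show ?thesis .
qed

end

end

theorem mainTheorem8:
  fixes q m :: nat and g1 g2 v1 :: "'a::{finite,field_gcd} poly"
  assumes "\<exists>p e. prime p \<and> e > 0 \<and> q = p ^ e"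
    and "CARD('a) = q ^ 2"
    and "m > 0"
    and "lead_coeff g1 = 1" and "g1 dvd xm1 m"
    and "lead_coeff g2 = 1" and "g2 dvd xm1 m"
    and "degree v1 < m"
  shows "herm_dual_containing q m (qc_code m g1 (v1 * g1) 0 g2) \<longleftrightarrow>
           rdvd m g1 (cperpH q m g1)
         \<and> rdvd m g1 (cperpH q m g2 * frob q (cbar m v1))
         \<and> rdvd m g2 (cperpH q m g2 * (1 + v1 * frob q (cbar m v1)))"
proof -
  note frobenius = q_power_additive_involutive[OF assms(1,2)]
  have "herm_dual_containing q m (qc_code m g1 (v1 * g1) 0 g2) \<longleftrightarrow>
      g1 dvd cperpH q m g1 \<and> g1 dvd cperpH q m g2 * hconj q m v1
      \<and> g2 dvd cperpH q m g2 * (1 + v1 * hconj q m v1)"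
    by (rule herm_dual_containing_qc_code_iff[OF frobenius assms(3-7)])
  then show ?thesis
    using assms(5,7) by (simp add: rdvd_def dvd_rep_iff hconj_def)
qed

end
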